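(* Let $c_1,\dots,c_{n-1}$ be free generators of a free $\mathbb Z$-module, put $c_0=-(c_1+\dots+c_{n-1})$, and set $c_i=c_{i'}$ whenever $i\equiv i'\pmod n$ ($i\in\mathbb Z$). For $i,j\in\mathbb Z$ let $c_{i,j}=c_{i-1}+c_{i-2}+\dots+c_{j'}$, where $j'\le i$ is an integer with $j'\equiv j\pmod n$. This does not depend on the choice of $j'$ since $c_0+\dots+c_{n-1}=0$; the sum is empty, hence $0$, if $j'=i$. Let $i_1,\dots,i_n$ be integers. Then the following are equivalent: 1. modulo $n$, the set $\{i_1,\dots,i_n\}$ coincides with $\{1,\dots,n\}$; 2. $\sum_{m=1}^nc_{i_m}=0$; 3. $\sum_{m=1}^nc_{i_m,m}=0$.
   Context: $n\ge3$ is a fixed integer. *)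

theory Defs
  imports Main "HOL-Library.Function_Algebras"
begin

text \<open>The free Z-module on generators c_1,...,c_{n-1} is modelled concretely as the
finitely supported functions nat => int supported on {1..n-1}; the generator c_k
(1 <= k <= n-1) is the indicator function of k.\<close>

definition cgen :: "nat \<Rightarrow> int \<Rightarrow> (nat \<Rightarrow> int)" where
  "cgen n i =
     (let r = nat (i mod int n) in
      if r = 0 then (\<lambda>k. if 1 \<le> k \<and> k \<le> n - 1 then -1 else 0)
      else (\<lambda>k. if k = r then 1 else 0))"

text \<open>c_{i,j} = c_{i-1} + ... + c_{j'} with j' <= i, j' = j mod n; we take the
canonical choice j' = i - ((i - j) mod n) (the paper notes independence of the choice).\<close>

definition cseg :: "nat \<Rightarrow> int \<Rightarrow> int \<Rightarrow> (nat \<Rightarrow> int)" where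
  "cseg n i j = (\<Sum>k\<in>{i - ((i - j) mod int n)..<i}. cgen n k)"

end

theory Submission
  imports Defs
begin

text \<open>Let \<open>A r\<close> be the number of indices \<open>m\<close> with \<open>i\<^sub>m \<equiv> r (mod n)\<close>; these \<open>n\<close> counts are
nonnegative and add up to \<open>n\<close>. Condition 1 says that every \<open>A r\<close> is positive, which forces
\<open>A = 1\<close>. The \<open>k\<close>-th coordinate of \<open>\<Sum> c\<^sub>i\<^sub>m\<close> is \<open>A k - A 0\<close>, so condition 2 says that \<open>A\<close>
is constant, again forcing \<open>A = 1\<close>. The \<open>k\<close>-th coordinate of \<open>c\<^sub>t\<close> is \<open>G t - G (t+1)\<close>,
where \<open>G\<close> indicates that the residue of its argument lies in \<open>{1..k}\<close>. Hence the segment sums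
telescope, \<open>c\<^sub>i\<^sub>,\<^sub>j\<close> having \<open>k\<close>-th coordinate \<open>G j - G i\<close>, and the \<open>k\<close>-th coordinate of
\<open>\<Sum> c\<^sub>i\<^sub>m\<^sub>,\<^sub>m\<close> is \<open>k - (A 1 + \<dots> + A k)\<close>; so condition 3 says that the partial sums of \<open>A\<close>
are those of the constant \<open>1\<close>, once more forcing \<open>A = 1\<close>.\<close>

lemma sum_fun_apply: "(\<Sum>x\<in>S. f x) k = (\<Sum>x\<in>S. (f x k :: 'b :: comm_monoid_add))"
  by (induction S rule: infinite_finite_induct) auto

lemma sum_int_interval_telescope:
  "(\<Sum>k\<in>{a..<a + int L}. g (k + 1) - g k :: 'b :: ab_group_add) = g (a + int L) - g a"
proof (induction L)
  case (Suc L)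
  have "{a..<a + int (Suc L)} = insert (a + int L) {a..<a + int L}" by auto
  then show ?case using Suc by (simp add: algebra_simps)
qed simp

lemma sum_eq_card_all_eq_1_iff_ge_1:
  fixes f :: "'a \<Rightarrow> int"
  assumes "finite B" "(\<Sum>b\<in>B. f b) = int (card B)"
  shows "(\<forall>b\<in>B. f b = 1) \<longleftrightarrow> (\<forall>b\<in>B. f b \<ge> 1)"
proof
  assume ge: "\<forall>b\<in>B. f b \<ge> 1"
  have zero: "(\<Sum>b\<in>B. f b - 1) = 0" using assms by (simp add: sum_subtractf)
  have nonneg: "\<And>b. b \<in> B \<Longrightarrow> 0 \<le> f b - 1" using ge by (metis diff_ge_0_iff_ge)
  have "\<forall>b\<in>B. f b - 1 = 0"
    using sum_nonneg_eq_0_iff[OF \<open>finite B\<close> nonneg] zero by (rule iffD1)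
  then show "\<forall>b\<in>B. f b = 1" by simp
qed auto

lemma sum_eq_card_all_eq_1_iff_const:
  fixes f :: "'a \<Rightarrow> int"
  assumes "finite B" "(\<Sum>b\<in>B. f b) = int (card B)" "b\<^sub>0 \<in> B"
  shows "(\<forall>b\<in>B. f b = 1) \<longleftrightarrow> (\<forall>b\<in>B. f b = f b\<^sub>0)"
proof
  assume const: "\<forall>b\<in>B. f b = f b\<^sub>0"
  then have "int (card B) * f b\<^sub>0 = int (card B)" using assms(2) by simp
  moreover have "card B > 0" using assms(1,3) card_gt_0_iff by blast
  ultimately show "\<forall>b\<in>B. f b = 1" using const by simp
qed (use assms(3) in auto)

lemma sum_eq_card_all_eq_1_iff_partial_sums:
  fixes f :: "int \<Rightarrow> int" and N :: int
  assumes "N \<ge> 1" "(\<Sum>r\<in>{0..<N}. f r) = N"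
  shows "(\<forall>r\<in>{0..<N}. f r = 1) \<longleftrightarrow> (\<forall>q\<in>{1..<N}. (\<Sum>r\<in>{1..q}. f r) = q)"
proof
  assume "\<forall>r\<in>{0..<N}. f r = 1"
  then show "\<forall>q\<in>{1..<N}. (\<Sum>r\<in>{1..q}. f r) = q" by auto
next
  assume partial: "\<forall>q\<in>{1..<N}. (\<Sum>r\<in>{1..q}. f r) = q"
  then have partial': "(\<Sum>r\<in>{1..q}. f r) = q" if "q \<in> {0..<N}" for q
    using that by (cases "q = 0") auto
  have step: "(\<Sum>r\<in>{1..q}. f r) = (\<Sum>r\<in>{1..q - 1}. f r) + f q" if "q \<ge> 1" for q
  proof -
    have "{1..q} = insert q {1..q - 1}" using that by auto
    then show ?thesis by simp
  qed
  have pos: "f r = 1" if "r \<in> {1..<N}" for r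
    using step[of r] partial'[of r] partial'[of "r - 1"] that by auto
  have "{0..<N} = insert 0 {1..N - 1}" using assms(1) by auto
  then have "N = f 0 + (\<Sum>r\<in>{1..N - 1}. f r)" using assms(2) by simp
  then have "f 0 = 1" using partial'[of "N - 1"] assms(1) by simp
  show "\<forall>r\<in>{0..<N}. f r = 1"
  proof
    fix r assume "r \<in> {0..<N}"
    then show "f r = 1" using pos \<open>f 0 = 1\<close> by (cases "r = 0") auto
  qed
qed

definition residue_count :: "nat \<Rightarrow> ('a \<Rightarrow> int) \<Rightarrow> 'a set \<Rightarrow> int \<Rightarrow> int" where
  "residue_count n x M r = (\<Sum>m\<in>M. of_bool (x m mod int n = r))"

lemma residue_count_ge_1_iff:
  assumes "finite M"
  shows "residue_count n x M r \<ge> 1 \<longleftrightarrow> (\<exists>m\<in>M. x m mod int n = r)"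
proof
  assume ge: "residue_count n x M r \<ge> 1"
  show "\<exists>m\<in>M. x m mod int n = r"
  proof (rule ccontr)
    assume "\<not> (\<exists>m\<in>M. x m mod int n = r)"
    then have "residue_count n x M r = 0"
      unfolding residue_count_def by (intro sum.neutral) auto
    then show False using ge by simp
  qed
next
  assume "\<exists>m\<in>M. x m mod int n = r"
  then obtain m where "m \<in> M" "x m mod int n = r" by blast
  then have "of_bool (x m mod int n = r) \<le> residue_count n x M r"
    unfolding residue_count_def by (intro member_le_sum) (use assms in auto)
  then show "residue_count n x M r \<ge> 1" using \<open>x m mod int n = r\<close> by simp
qed

lemma sum_residue_count:
  assumes "n > 0"
  shows "(\<Sum>r\<in>{0..<int n}. residue_count n x M r) = int (card M)"
proof -
  have "(\<Sum>r\<in>{0..<int n}. residue_count n x M r)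
      = (\<Sum>m\<in>M. \<Sum>r\<in>{0..<int n}. of_bool (x m mod int n = r))"
    unfolding residue_count_def by (rule sum.swap)
  also have "\<dots> = (\<Sum>m\<in>M. 1)"
    using assms by (intro sum.cong) (auto simp: sum.delta)
  finally show ?thesis by simp
qed

lemma residue_image_eq_iff:
  assumes "n > 0" "finite M"
  shows "(\<lambda>y. y mod int n) ` (x ` M) = (\<lambda>y. y mod int n) ` {1..int n}
    \<longleftrightarrow> (\<forall>r\<in>{0..<int n}. residue_count n x M r \<ge> 1)"
proof -
  have full: "(\<lambda>y. y mod int n) ` {1..int n} = {0..<int n}"
  proof (intro equalityI subsetI)
    fix r assume r: "r \<in> {0..<int n}"
    show "r \<in> (\<lambda>y. y mod int n) ` {1..int n}"
    proof (cases "r = 0")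
      case True
      then show ?thesis using assms(1) by (intro image_eqI[of _ _ "int n"]) auto
    qed (use r in \<open>auto intro: image_eqI[of _ _ r]\<close>)
  qed (use assms(1) in auto)
  have onto_iff: "g ` M = S \<longleftrightarrow> (\<forall>r\<in>S. \<exists>m\<in>M. g m = r)" if "g ` M \<subseteq> S" for g :: "_ \<Rightarrow> int" and S
    using that by (auto simp: image_iff)
  have "(\<lambda>m. x m mod int n) ` M = {0..<int n}
      \<longleftrightarrow> (\<forall>r\<in>{0..<int n}. \<exists>m\<in>M. x m mod int n = r)"
    by (rule onto_iff) (use assms(1) in auto)
  then show ?thesis
    unfolding full image_image residue_count_ge_1_iff[OF assms(2)] .
qed

lemma cgen_apply:
  assumes "n > 0"
  shows "cgen n x k = (if 1 \<le> k \<and> k < n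
      then of_bool (x mod int n = int k) - of_bool (x mod int n = 0) else 0)"
proof -
  define r where "r = x mod int n"
  have r: "0 \<le> r" "r < int n" using assms by (auto simp: r_def)
  then have "nat r = 0 \<longleftrightarrow> r = 0" "nat r = k \<longleftrightarrow> r = int k" by auto
  then show ?thesis unfolding cgen_def Let_def r_def[symmetric] using r by auto
qed

lemma sum_cgen_apply:
  assumes "n > 0"
  shows "(\<Sum>m\<in>M. cgen n (x m)) k = (if 1 \<le> k \<and> k < n
      then residue_count n x M (int k) - residue_count n x M 0 else 0)"
proof (cases "1 \<le> k \<and> k < n")
  case True
  then show ?thesis using assms unfolding sum_fun_apply residue_count_def
    by (simp add: cgen_apply sum_subtractf del: sum_of_bool_eq)
next
  case False
  then have "cgen n y k = 0" for y using assms cgen_apply by presburger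
  then show ?thesis by (subst if_not_P[OF False]) (simp add: sum_fun_apply)
qed

definition low_residue :: "nat \<Rightarrow> int \<Rightarrow> int \<Rightarrow> int" where
  "low_residue n q y = of_bool (y mod int n \<in> {1..q})"

lemma cgen_apply_eq_low_residue_diff:
  assumes "1 \<le> k" "k < n"
  shows "cgen n y k = low_residue n (int k) y - low_residue n (int k) (y + 1)"
proof -
  define r where "r = y mod int n"
  have r: "0 \<le> r" "r < int n" using assms by (auto simp: r_def)
  have "(y + 1) mod int n = (r + 1) mod int n" by (simp add: r_def mod_add_left_eq)
  also have "\<dots> = (if r + 1 = int n then 0 else r + 1)" using r by auto
  finally have succ: "(y + 1) mod int n = (if r + 1 = int n then 0 else r + 1)" .
  show ?thesis
    using assms r cgen_apply[of n y k] unfolding low_residue_def succ r_def[symmetric] by auto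
qed

lemma cseg_apply:
  assumes "1 \<le> k" "k < n"
  shows "cseg n a b k = low_residue n (int k) b - low_residue n (int k) a"
proof -
  define L where "L = (a - b) mod int n"
  have L: "0 \<le> L" using assms by (simp add: L_def)
  let ?G = "\<lambda>t. - low_residue n (int k) t"
  have "cseg n a b k = (\<Sum>t\<in>{a - L..<(a - L) + int (nat L)}. ?G (t + 1) - ?G t)"
    using L cgen_apply_eq_low_residue_diff[OF assms]
    unfolding cseg_def L_def by (simp add: sum_fun_apply)
  also have "\<dots> = ?G a - ?G (a - L)"
    using L by (subst sum_int_interval_telescope) simp
  also have "(a - L) mod int n = b mod int n"
    unfolding L_def by (simp add: mod_diff_right_eq)
  then have "?G (a - L) = ?G b" unfolding low_residue_def by simp
  finally show ?thesis by simp
qed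

lemma sum_low_residue_int:
  assumes "1 \<le> k" "k < n"
  shows "(\<Sum>m\<in>{1..n}. low_residue n (int k) (int m)) = int k"
proof -
  have "low_residue n (int k) (int m) = of_bool (m \<in> {1..k})" if "m \<in> {1..n}" for m
    using assms that unfolding low_residue_def by (cases "m = n") auto
  then have "(\<Sum>m\<in>{1..n}. low_residue n (int k) (int m)) = (\<Sum>m\<in>{1..n}. of_bool (m \<in> {1..k}))"
    by (rule sum.cong[OF refl])
  also have "\<dots> = int (card ({1..n} \<inter> {m. m \<in> {1..k}}))"
    by (intro sum_of_bool_eq finite_atLeastAtMost)
  also have "{1..n} \<inter> {m. m \<in> {1..k}} = {1..k}" using assms by auto
  finally show ?thesis by simp
qed

lemma sum_low_residue_eq_sum_residue_count:
  "(\<Sum>m\<in>M. low_residue n q (x m)) = (\<Sum>r\<in>{1..q}. residue_count n x M r)"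
proof -
  have "(\<Sum>r\<in>{1..q}. residue_count n x M r) = (\<Sum>m\<in>M. \<Sum>r\<in>{1..q}. of_bool (x m mod int n = r))"
    unfolding residue_count_def by (rule sum.swap)
  also have "\<dots> = (\<Sum>m\<in>M. low_residue n q (x m))"
    unfolding low_residue_def by (intro sum.cong) (auto simp: sum.delta)
  finally show ?thesis by simp
qed

lemma sum_cseg_apply:
  assumes "n > 0"
  shows "(\<Sum>m\<in>{1..n}. cseg n (x m) (int m)) k = (if 1 \<le> k \<and> k < n
      then int k - (\<Sum>r\<in>{1..int k}. residue_count n x {1..n} r) else 0)"
proof (cases "1 \<le> k \<and> k < n")
  case True
  then have "(\<Sum>m\<in>{1..n}. cseg n (x m) (int m)) k
      = (\<Sum>m\<in>{1..n}. low_residue n (int k) (int m)) - (\<Sum>m\<in>{1..n}. low_residue n (int k) (x m))"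
    by (simp add: sum_fun_apply cseg_apply sum_subtractf)
  also have "\<dots> = int k - (\<Sum>r\<in>{1..int k}. residue_count n x {1..n} r)"
    using True sum_low_residue_int[of k n] sum_low_residue_eq_sum_residue_count[of n "int k" x]
    by simp
  finally show ?thesis using True by simp
next
  case False
  have "cseg n a b k = 0" for a b
    unfolding cseg_def sum_fun_apply using False assms by (intro sum.neutral) (auto simp: cgen_apply)
  then show ?thesis by (subst if_not_P[OF False]) (simp add: sum_fun_apply)
qed

lemma all_nat_range_iff_all_int_range:
  "(\<forall>k. 1 \<le> k \<and> k < n \<longrightarrow> P (int k)) \<longleftrightarrow> (\<forall>r\<in>{1..<int n}. P r)"
proof safe
  fix r assume all: "\<forall>k. 1 \<le> k \<and> k < n \<longrightarrow> P (int k)" and r: "r \<in> {1..<int n}"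
  then have "1 \<le> nat r" "nat r < n" by auto
  then have "P (int (nat r))" using all by blast
  then show "P r" using r by simp
qed auto

lemma sum_cgen_eq_0_iff:
  assumes "n > 0"
  shows "(\<Sum>m\<in>M. cgen n (x m)) = 0
    \<longleftrightarrow> (\<forall>r\<in>{0..<int n}. residue_count n x M r = residue_count n x M 0)"
proof -
  have "(\<Sum>m\<in>M. cgen n (x m)) = 0
      \<longleftrightarrow> (\<forall>k. 1 \<le> k \<and> k < n \<longrightarrow> residue_count n x M (int k) = residue_count n x M 0)"
    using assms by (simp add: fun_eq_iff sum_cgen_apply)
  also have "\<dots> \<longleftrightarrow> (\<forall>r\<in>{1..<int n}. residue_count n x M r = residue_count n x M 0)"
    by (rule all_nat_range_iff_all_int_range[where P = "\<lambda>r. residue_count n x M r = residue_count n x M 0"])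
  also have "\<dots> \<longleftrightarrow> (\<forall>r\<in>{0..<int n}. residue_count n x M r = residue_count n x M 0)"
  proof -
    have "{0..<int n} = insert 0 {1..<int n}" using assms by auto
    then show ?thesis by simp
  qed
  finally show ?thesis .
qed

lemma sum_cseg_eq_0_iff:
  assumes "n > 0"
  shows "(\<Sum>m\<in>{1..n}. cseg n (x m) (int m)) = 0
    \<longleftrightarrow> (\<forall>q\<in>{1..<int n}. (\<Sum>r\<in>{1..q}. residue_count n x {1..n} r) = q)"
proof -
  have "(\<Sum>m\<in>{1..n}. cseg n (x m) (int m)) = 0
      \<longleftrightarrow> (\<forall>k. 1 \<le> k \<and> k < n \<longrightarrow> (\<Sum>r\<in>{1..int k}. residue_count n x {1..n} r) = int k)"
    unfolding fun_eq_iff zero_fun_apply sum_cseg_apply[OF assms] by auto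
  also have "\<dots> \<longleftrightarrow> (\<forall>q\<in>{1..<int n}. (\<Sum>r\<in>{1..q}. residue_count n x {1..n} r) = q)"
    by (rule all_nat_range_iff_all_int_range[where P = "\<lambda>q. (\<Sum>r\<in>{1..q}. residue_count n x {1..n} r) = q"])
  finally show ?thesis .
qed

theorem mainTheorem8:
  fixes n :: nat and i :: "nat \<Rightarrow> int"
  assumes "n \<ge> 3"
  shows "((\<lambda>x. x mod int n) ` (i ` {1..n}) = (\<lambda>x. x mod int n) ` {1..int n}
            \<longleftrightarrow> (\<Sum>m\<in>{1..n}. cgen n (i m)) = 0)
       \<and> ((\<Sum>m\<in>{1..n}. cgen n (i m)) = 0
            \<longleftrightarrow> (\<Sum>m\<in>{1..n}. cseg n (i m) (int m)) = 0)"
proof -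
  let ?A = "residue_count n i {1..n}"
  have n: "n > 0" using assms by simp
  have total: "(\<Sum>r\<in>{0..<int n}. ?A r) = int n"
    using sum_residue_count[OF n, of i "{1..n}"] by simp
  then have total_card: "(\<Sum>r\<in>{0..<int n}. ?A r) = int (card {0..<int n})"
    by simp
  have cover: "(\<lambda>x. x mod int n) ` (i ` {1..n}) = (\<lambda>x. x mod int n) ` {1..int n}
      \<longleftrightarrow> (\<forall>r\<in>{0..<int n}. ?A r = 1)"
    unfolding residue_image_eq_iff[OF n finite_atLeastAtMost]
    by (rule sum_eq_card_all_eq_1_iff_ge_1[OF finite_atLeastLessThan_int total_card, symmetric])
  have generators: "(\<Sum>m\<in>{1..n}. cgen n (i m)) = 0 \<longleftrightarrow> (\<forall>r\<in>{0..<int n}. ?A r = 1)"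
    unfolding sum_cgen_eq_0_iff[OF n]
    by (rule sum_eq_card_all_eq_1_iff_const[OF finite_atLeastLessThan_int total_card, symmetric])
      (use n in simp)
  have segments: "(\<Sum>m\<in>{1..n}. cseg n (i m) (int m)) = 0 \<longleftrightarrow> (\<forall>r\<in>{0..<int n}. ?A r = 1)"
    unfolding sum_cseg_eq_0_iff[OF n]
    by (rule sum_eq_card_all_eq_1_iff_partial_sums[OF _ total, symmetric]) (use n in simp)
  show ?thesis unfolding cover generators segments by (rule conjI refl)+
qed

end
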